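(* Let $A$ be a linear Nakayama algebra with vertices labelled canonically $1\to 2\to\cdots\to n$. Then Ringel's homological permutation $\hat{h}$ of $A$ coincides with the Coxeter permutation $p_A$ of $A$ (computed with respect to this labelling).
   Context: $A=KQ/I$ with $K$ a field, $Q$ the quiver $1\to2\to\cdots\to n$ and $I$ an admissible ideal (a linear Nakayama algebra); modules are finitely generated right modules, $S_i$, $P(i)=e_iA$, $I(i)=D(Ae_i)$ are the simple, indecomposable projective and indecomposable injective modules at vertex $i$, and $I(S)$ denotes the injective envelope of $S$. $\Omega$ denotes the syzygy (kernel of a projective cover). For a simple module $S$ let $e(S)=\min\{\operatorname{pdim}S,\operatorname{pdim}I(S)\}$ (finite for Nakayama algebras), let $N(S)=S$ if $e(S)$ is odd and $N(S)=I(S)$ if $e(S)$ is even, and set $h(S)=\operatorname{top}\Omega^{e(S)}(N(S))$; this is a simple module and $h$ is a bijection on isoclasses of simple modules. Ringel's homological permutation is $\hat h:\{1,\ldots,n\}\to\{1,\ldots,n\}$, $\hat h(i)=j$ if $h(S_i)\cong S_j$. The Cartan matrix is $\omega_A=(\dim_K e_jAe_i)_{i,j}$, the Coxeter matrix is $C_A=-\omega_A^T\omega_A^{-1}$. A Bruhat decomposition of an invertible matrix $M$ is $M=U_1PU_2$ with $U_1,U_2$ upper triangular and $P$ a permutation matrix (uniquely determined by $M$). The Coxeter permutation $p_A$ is defined by $p_A(i)=j$ if the unique non-zero entry in column $i$ of the permutation matrix $P$ of a Bruhat decomposition of $C_A$ lies in row $j$. *)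

theory Defs
  imports "Jordan_Normal_Form.Gauss_Jordan_Elimination" "HOL-Library.Extended_Nat"
begin

text \<open>
  Combinatorial model of a linear Nakayama algebra A = KQ/I, Q = 0 -> 1 -> ... -> n-1
  (vertices shifted to 0-based indices), given by its Kupisch series
  c i = dim_K (e_i A) = length of the indecomposable projective P(i).
  P(i) has composition factors S_i, S_(i+1), ..., S_(i + c i - 1) (top S_i).
  Every admissible ideal I gives such a series and every such series arises.
\<close>

definition kupisch :: "nat \<Rightarrow> (nat \<Rightarrow> nat) \<Rightarrow> bool" where
  "kupisch n c \<longleftrightarrow> n \<ge> 1 \<and> c (n - 1) = 1 \<and>
     (\<forall>i < n - 1. c i \<ge> 2 \<and> c (Suc i) \<ge> c i - 1)"

text \<open>Indecomposable modules: Some (i, l) is the uniserial module with top S_i and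
  length l (composition factors S_i, ..., S_(i+l-1)), where 1 <= l <= c i;
  None is the zero module.\<close>

type_synonym nmod = "(nat \<times> nat) option"

definition simple_mod :: "nat \<Rightarrow> nmod" where
  "simple_mod i = Some (i, 1)"

text \<open>Projective cover of Some (i,l) is P(i) = Some (i, c i); the syzygy is the kernel.\<close>
fun syz :: "(nat \<Rightarrow> nat) \<Rightarrow> nmod \<Rightarrow> nmod" where
  "syz c None = None"
| "syz c (Some (i, l)) = (if l \<ge> c i then None else Some (i + l, c i - l))"

fun is_proj :: "(nat \<Rightarrow> nat) \<Rightarrow> nmod \<Rightarrow> bool" where
  "is_proj c None = True"
| "is_proj c (Some (i, l)) = (l = c i)"

definition pdim :: "(nat \<Rightarrow> nat) \<Rightarrow> nmod \<Rightarrow> enat" where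
  "pdim c M = (if \<exists>k. is_proj c ((syz c ^^ k) M)
               then enat (LEAST k. is_proj c ((syz c ^^ k) M)) else \<infinity>)"

text \<open>Injective envelope of S_j: I(j) = D(A e_j), the longest uniserial module
  with socle S_j, i.e. Some (i, j - i + 1) with i minimal such that j - i + 1 <= c i.\<close>
definition inj_env :: "(nat \<Rightarrow> nat) \<Rightarrow> nat \<Rightarrow> nmod" where
  "inj_env c j = (let i = (LEAST i. i \<le> j \<and> j - i + 1 \<le> c i) in Some (i, j - i + 1))"

fun top_mod :: "nmod \<Rightarrow> nat" where
  "top_mod (Some (i, l)) = i"
| "top_mod None = undefined"

definition e_val :: "(nat \<Rightarrow> nat) \<Rightarrow> nat \<Rightarrow> enat" where
  "e_val c j = min (pdim c (simple_mod j)) (pdim c (inj_env c j))"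

definition N_mod :: "(nat \<Rightarrow> nat) \<Rightarrow> nat \<Rightarrow> nmod" where
  "N_mod c j = (if odd (the_enat (e_val c j)) then simple_mod j else inj_env c j)"

definition ringel_hperm :: "(nat \<Rightarrow> nat) \<Rightarrow> nat \<Rightarrow> nat" where
  "ringel_hperm c j = top_mod ((syz c ^^ the_enat (e_val c j)) (N_mod c j))"

text \<open>Cartan matrix: entry (i,j) is dim_K e_j A e_i = multiplicity of S_i in P(j).\<close>
definition cartan :: "nat \<Rightarrow> (nat \<Rightarrow> nat) \<Rightarrow> rat mat" where
  "cartan n c = mat n n (\<lambda>(i, j). if j \<le> i \<and> i < j + c j then 1 else 0)"

definition coxeter :: "nat \<Rightarrow> (nat \<Rightarrow> nat) \<Rightarrow> rat mat" where
  "coxeter n c = - (transpose_mat (cartan n c) * the (mat_inverse (cartan n c)))"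

definition is_perm_mat :: "nat \<Rightarrow> rat mat \<Rightarrow> bool" where
  "is_perm_mat n P \<longleftrightarrow> P \<in> carrier_mat n n \<and>
     (\<forall>i<n. \<forall>j<n. P $$ (i, j) = 0 \<or> P $$ (i, j) = 1) \<and>
     (\<forall>j<n. \<exists>!i. i < n \<and> P $$ (i, j) = 1) \<and>
     (\<forall>i<n. \<exists>!j. j < n \<and> P $$ (i, j) = 1)"

definition perm_mat :: "nat \<Rightarrow> (nat \<Rightarrow> nat) \<Rightarrow> rat mat" where
  "perm_mat n p = mat n n (\<lambda>(i, j). if i = p j then 1 else 0)"

definition bruhat :: "nat \<Rightarrow> rat mat \<Rightarrow> rat mat \<Rightarrow> rat mat \<Rightarrow> rat mat \<Rightarrow> bool" where
  "bruhat n M U1 P U2 \<longleftrightarrow> U1 \<in> carrier_mat n n \<and> U2 \<in> carrier_mat n n \<and>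
     upper_triangular U1 \<and> upper_triangular U2 \<and> is_perm_mat n P \<and> M = U1 * P * U2"

definition is_coxeter_perm :: "nat \<Rightarrow> rat mat \<Rightarrow> (nat \<Rightarrow> nat) \<Rightarrow> bool" where
  "is_coxeter_perm n M p \<longleftrightarrow>
     (\<exists>U1 P U2. bruhat n M U1 P U2) \<and>
     (\<forall>U1 P U2. bruhat n M U1 P U2 \<longrightarrow> (\<forall>i<n. \<forall>j<n. P $$ (j, i) \<noteq> 0 \<longleftrightarrow> j = p i))"

end

(*
  Write the indecomposable modules as intervals [x, y) of composition factors, with vertices
  numbered from 0. As P(x) = [x, F x) for F x = x + c x, the syzygy of [x, y) is [y, F x), so
  the minimal projective resolutions of S_r = [r, r + 1) and of I(r) = [g, r + 1) are read off
  from the interleaving F-orbits of g <= r < r + 1. A projective syzygy shows up first in I(r)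
  at even and in S_r at odd steps, hence h(S_r) is the top of the last term of the resolution
  of N(S_r).

  In the Grothendieck group, the Cartan matrix C maps the alternating sums Y of these
  resolutions to the dimension vectors U of the modules N(S_r); U is upper triangular and,
  since the tops along a resolution increase up to h(S_r), Y = T P_h with T upper
  unitriangular. Thus C^-1 = T P_h U^-1, and -C^T C^-1 = (-C^T T) P_h U^-1 is a Bruhat
  decomposition.

  That h is a bijection is seen by following, as the level j grows, which F-orbits have met
  in their first point >= j: h(S_r) is the unique level at which the orbit of r + 1 joins
  that of a vertex <= r.
*)
theory Submission
  imports Defs "Jordan_Normal_Form.Determinant"
begin

section \<open>Triangular and permutation matrices\<close>

lemma index_mult_mat_sum:
  assumes "A \<in> carrier_mat n m" "B \<in> carrier_mat m p" "i < n" "j < p"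
  shows "(A * B) $$ (i, j) = (\<Sum>k<m. A $$ (i, k) * B $$ (k, j))"
  using assms by (simp add: scalar_prod_def lessThan_atLeast0)

lemma upper_triangular_index_mult_left:
  assumes A: "A \<in> carrier_mat n n" and B: "B \<in> carrier_mat n m"
    and uA: "upper_triangular A" and i: "i < n" and j: "j < m"
  shows "(A * B) $$ (i, j) = (\<Sum>k\<in>{i..<n}. A $$ (i, k) * B $$ (k, j))"
proof -
  have "(A * B) $$ (i, j) = (\<Sum>k<n. A $$ (i, k) * B $$ (k, j))"
    using index_mult_mat_sum[OF A B i j] .
  also have "\<dots> = (\<Sum>k\<in>{i..<n}. A $$ (i, k) * B $$ (k, j))"
    by (rule sum.mono_neutral_right) (use A uA i in \<open>auto simp: upper_triangularD not_le\<close>)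
  finally show ?thesis .
qed

lemma upper_triangular_index_mult:
  assumes A: "A \<in> carrier_mat n n" and B: "B \<in> carrier_mat n n"
    and uA: "upper_triangular A" and uB: "upper_triangular B" and i: "i < n" and j: "j < n"
  shows "(A * B) $$ (i, j) = (\<Sum>k\<in>{i..j}. A $$ (i, k) * B $$ (k, j))"
proof -
  have "(A * B) $$ (i, j) = (\<Sum>k\<in>{i..<n}. A $$ (i, k) * B $$ (k, j))"
    using upper_triangular_index_mult_left[OF A B uA i j] .
  also have "\<dots> = (\<Sum>k\<in>{i..j}. A $$ (i, k) * B $$ (k, j))"
    by (rule sum.mono_neutral_right) (use B uB j in \<open>auto simp: upper_triangularD not_le\<close>)
  finally show ?thesis .
qed

lemma upper_triangular_mult:
  assumes "A \<in> carrier_mat n n" "B \<in> carrier_mat n n" "upper_triangular A" "upper_triangular B"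
  shows "upper_triangular (A * B)"
proof
  fix i j assume "j < i" "i < dim_row (A * B)"
  then show "(A * B) $$ (i, j) = 0"
    using upper_triangular_index_mult[OF assms, of i j] assms(1) by simp
qed

lemma upper_triangular_diag_mult:
  assumes "A \<in> carrier_mat n n" "B \<in> carrier_mat n n" "upper_triangular A" "upper_triangular B"
    and "i < n"
  shows "(A * B) $$ (i, i) = A $$ (i, i) * B $$ (i, i)"
  using upper_triangular_index_mult[OF assms(1-5) assms(5)] by simp

lemma upper_triangular_uminus:
  fixes A :: "'a :: group_add mat"
  shows "A \<in> carrier_mat n n \<Longrightarrow> upper_triangular A \<Longrightarrow> upper_triangular (- A)"
  by (intro upper_triangularI) (simp add: upper_triangularD)

lemma upper_triangular_det_nonzero_iff:
  fixes A :: "'a :: idom mat"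
  assumes "A \<in> carrier_mat n n" "upper_triangular A"
  shows "det A \<noteq> 0 \<longleftrightarrow> (\<forall>i<n. A $$ (i, i) \<noteq> 0)"
  using upper_triangular_imp_det_eq_0_iff[OF assms] assms(1) by (auto simp: diag_mat_def)

lemma upper_triangular_right_inverse:
  fixes A B :: "'a :: idom mat"
  assumes A: "A \<in> carrier_mat n n" and B: "B \<in> carrier_mat n n"
    and uA: "upper_triangular A" and dA: "\<forall>i<n. A $$ (i, i) \<noteq> 0"
    and AB: "A * B = 1\<^sub>m n"
  shows "upper_triangular B"
proof -
  have "B $$ (i, j) = 0" if "j < i" "i < n" for i j
    using that
  proof (induction "n - i" arbitrary: i rule: less_induct)
    case less
    have "B $$ (k, j) = 0" if "i < k" "k < n" for k
      using less.hyps[of k] less.prems that by simp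
    moreover have "j < n" using less.prems by simp
    ultimately have "(A * B) $$ (i, j) = (\<Sum>k\<in>{i}. A $$ (i, k) * B $$ (k, j))"
      unfolding upper_triangular_index_mult_left[OF A B uA less.prems(2) \<open>j < n\<close>]
      by (intro sum.mono_neutral_right) (use less.prems in auto)
    then show ?case using AB less.prems dA by auto
  qed
  then show ?thesis using B by (intro upper_triangularI) auto
qed

lemma upper_triangular_inverse_exists:
  fixes A :: "'a :: field mat"
  assumes A: "A \<in> carrier_mat n n" and uA: "upper_triangular A" and dA: "\<forall>i<n. A $$ (i, i) \<noteq> 0"
  obtains W where "W \<in> carrier_mat n n" "A * W = 1\<^sub>m n" "W * A = 1\<^sub>m n"
    "upper_triangular W" "\<forall>i<n. W $$ (i, i) \<noteq> 0"
proof -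
  have "det A \<noteq> 0" using upper_triangular_det_nonzero_iff[OF A uA] dA by simp
  then have "A \<in> Units (ring_mat TYPE('a) n undefined)" by (rule det_non_zero_imp_unit[OF A])
  then obtain W where W: "W \<in> carrier_mat n n" "A * W = 1\<^sub>m n" "W * A = 1\<^sub>m n"
    unfolding Units_def ring_mat_def by auto
  have uW: "upper_triangular W" using upper_triangular_right_inverse[OF A W(1) uA dA W(2)] .
  have "W $$ (i, i) * A $$ (i, i) = 1" if "i < n" for i
    using upper_triangular_diag_mult[OF W(1) A uW uA that] W(3) that by simp
  then have "\<forall>i<n. W $$ (i, i) \<noteq> 0" by fastforce
  with W uW show ?thesis using that by blast
qed

lemma mat_inverse_eq_Some:
  fixes A B :: "'a :: field mat"
  assumes A: "A \<in> carrier_mat n n" and B: "B \<in> carrier_mat n n" and AB: "A * B = 1\<^sub>m n"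
  shows "mat_inverse A = Some B"
proof (cases "mat_inverse A")
  case None
  have "det A \<noteq> 0" using det_mult[OF A B] AB by auto
  then have "A \<in> Units (ring_mat TYPE('a) n ())" by (rule det_non_zero_imp_unit[OF A])
  moreover have "A \<notin> Units (ring_mat TYPE('a) n ())" by (rule mat_inverse(1)[OF A None])
  ultimately show ?thesis by contradiction
next
  case (Some B')
  then have B': "B' * A = 1\<^sub>m n" "B' \<in> carrier_mat n n" using mat_inverse(2)[OF A] by auto
  have "B' = B' * (A * B)" using AB B'(2) by simp
  also have "\<dots> = (B' * A) * B" using A B B'(2) by (simp add: assoc_mult_mat)
  finally show ?thesis using Some B'(1) B by simp
qed

lemma perm_mat_carrier[simp]: "perm_mat n h \<in> carrier_mat n n"
  and dim_row_perm_mat[simp]: "dim_row (perm_mat n h) = n"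
  and dim_col_perm_mat[simp]: "dim_col (perm_mat n h) = n"
  unfolding perm_mat_def by simp_all

lemma index_perm_mat: "i < n \<Longrightarrow> j < n \<Longrightarrow> perm_mat n h $$ (i, j) = (if i = h j then 1 else 0)"
  unfolding perm_mat_def by simp

lemma perm_mat_cong: "(\<And>j. j < n \<Longrightarrow> h j = h' j) \<Longrightarrow> perm_mat n h = perm_mat n h'"
  unfolding perm_mat_def by (intro eq_matI) auto

lemma index_mult_perm_mat:
  assumes A: "A \<in> carrier_mat m n" and i: "i < m" and j: "j < n" and hj: "h j < n"
  shows "(A * perm_mat n h) $$ (i, j) = A $$ (i, h j)"
proof -
  have "(A * perm_mat n h) $$ (i, j) = (\<Sum>k<n. A $$ (i, k) * perm_mat n h $$ (k, j))"
    by (rule index_mult_mat_sum[OF A perm_mat_carrier i j])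
  also have "\<dots> = (\<Sum>k<n. if k = h j then A $$ (i, k) else 0)"
    by (intro sum.cong) (simp_all add: index_perm_mat j)
  also have "\<dots> = A $$ (i, h j)" using hj by simp
  finally show ?thesis .
qed

lemma bij_betw_the_inv_into_lessThan:
  assumes "bij_betw h {..<n} {..<n}" "i < n"
  shows "the_inv_into {..<n} h i < n" "h (the_inv_into {..<n} h i) = i"
  using bij_betwE[OF bij_betw_the_inv_into[OF assms(1)]] assms
  by (simp_all add: f_the_inv_into_f_bij_betw)

lemma perm_mat_mult_inverse:
  assumes h: "bij_betw h {..<n} {..<n}"
  shows "perm_mat n h * perm_mat n (the_inv_into {..<n} h) = 1\<^sub>m n"
proof (rule eq_matI)
  fix i j assume "i < dim_row (1\<^sub>m n :: rat mat)" "j < dim_col (1\<^sub>m n :: rat mat)"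
  then have ij: "i < n" "j < n" by simp_all
  note inv = bij_betw_the_inv_into_lessThan[OF h ij(2)]
  show "(perm_mat n h * perm_mat n (the_inv_into {..<n} h)) $$ (i, j) = 1\<^sub>m n $$ (i, j)"
    using ij inv index_mult_perm_mat[of "perm_mat n h" n n i j "the_inv_into {..<n} h"] by (simp add: index_perm_mat)
qed simp_all

lemma det_perm_mat_nonzero:
  assumes "bij_betw h {..<n} {..<n}"
  shows "det (perm_mat n h) \<noteq> 0"
proof -
  let ?g = "the_inv_into {..<n} h"
  have "det (perm_mat n h * perm_mat n ?g) = det (perm_mat n h) * det (perm_mat n ?g)"
    using det_mult[of "perm_mat n h" n "perm_mat n ?g"] by simp
  then have "det (perm_mat n h) * det (perm_mat n ?g) = 1"
    using perm_mat_mult_inverse[OF assms] by simp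
  then show ?thesis by auto
qed

lemma is_perm_mat_perm_mat:
  assumes h: "bij_betw h {..<n} {..<n}"
  shows "is_perm_mat n (perm_mat n h)"
  unfolding is_perm_mat_def
proof (intro conjI allI impI)
  fix j assume j: "j < n"
  then have hj: "h j < n" using h by (auto simp: bij_betw_def)
  show "\<exists>!i. i < n \<and> perm_mat n h $$ (i, j) = 1"
  proof (rule ex1I[of _ "h j"])
    fix i assume "i < n \<and> perm_mat n h $$ (i, j) = 1"
    then show "i = h j" using j index_perm_mat[of i n j h] by (cases "i = h j") simp_all
  qed (simp add: j hj index_perm_mat)
next
  fix i assume i: "i < n"
  note inv = bij_betw_the_inv_into_lessThan[OF h i]
  show "\<exists>!j. j < n \<and> perm_mat n h $$ (i, j) = 1"
  proof (rule ex1I[of _ "the_inv_into {..<n} h i"])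
    fix j assume "j < n \<and> perm_mat n h $$ (i, j) = 1"
    then have "j < n" "i = h j" using i index_perm_mat[of i n j h] by (cases "i = h j"; simp)+
    then show "j = the_inv_into {..<n} h i"
      using h by (simp add: bij_betw_def the_inv_into_f_f)
  qed (simp add: i inv index_perm_mat)
qed (simp_all add: index_perm_mat)

lemma factor_upper_triangular_perm_mat:
  fixes Y :: "rat mat"
  assumes Y: "Y \<in> carrier_mat n n" and h: "bij_betw h {..<n} {..<n}"
    and zero: "\<And>l j. l < n \<Longrightarrow> j < n \<Longrightarrow> h j < l \<Longrightarrow> Y $$ (l, j) = 0"
    and diag: "\<And>j. j < n \<Longrightarrow> Y $$ (h j, j) \<noteq> 0"
  obtains T where "T \<in> carrier_mat n n" "upper_triangular T" "\<forall>i<n. T $$ (i, i) \<noteq> 0"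
    "Y = T * perm_mat n h"
proof
  let ?g = "the_inv_into {..<n} h"
  note g = bij_betw_the_inv_into_lessThan[OF h]
  have gh: "?g (h j) = j" if "j < n" for j
    using that h by (simp add: bij_betw_def the_inv_into_f_f)
  have hj: "h j < n" if "j < n" for j using h that by (auto simp: bij_betw_def)
  define T where "T = Y * perm_mat n ?g"
  show T: "T \<in> carrier_mat n n" unfolding T_def using Y by simp
  have T_index: "T $$ (i, j) = Y $$ (i, ?g j)" if "i < n" "j < n" for i j
    unfolding T_def using index_mult_perm_mat[OF Y] that g by simp
  show "upper_triangular T"
    using T by (intro upper_triangularI) (auto simp: T_index g zero)
  show "\<forall>i<n. T $$ (i, i) \<noteq> 0"
  proof (intro allI impI)
    fix i assume "i < n"
    then show "T $$ (i, i) \<noteq> 0" using diag[of "?g i"] g[of i] by (simp add: T_index)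
  qed
  show "Y = T * perm_mat n h"
  proof (rule eq_matI)
    fix i j assume "i < dim_row (T * perm_mat n h)" "j < dim_col (T * perm_mat n h)"
    then have ij: "i < n" "j < n" using T by simp_all
    have "(T * perm_mat n h) $$ (i, j) = T $$ (i, h j)"
      by (rule index_mult_perm_mat[of T n n]) (use T ij hj in auto)
    then show "Y $$ (i, j) = (T * perm_mat n h) $$ (i, j)"
      using ij by (simp add: T_index hj gh)
  qed (use Y T in simp_all)
qed

section \<open>Bruhat decompositions with a prescribed permutation\<close>

lemma inj_on_le_self_imp_id:
  fixes s :: "nat \<Rightarrow> nat"
  assumes inj: "inj_on s {..<n}" and le: "\<And>r. r < n \<Longrightarrow> s r \<le> r" and "r < n"
  shows "s r = r"
  using \<open>r < n\<close>
proof (induction r rule: less_induct)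
  case (less r)
  show ?case
  proof (rule ccontr)
    assume "s r \<noteq> r"
    with le[OF less.prems] have "s r < r" by simp
    with less have "s (s r) = s r" by simp
    with inj \<open>s r < r\<close> less.prems have "s r = r" by (auto simp: inj_on_def)
    with \<open>s r \<noteq> r\<close> show False ..
  qed
qed

text \<open>Entry (h r, r) of Q * B = X * P_h is nonzero, so row h r of Q has its 1 in some
  column s r \<le> r; since s is injective, it is the identity.\<close>
lemma perm_mat_eq_of_upper_triangular_mult:
  fixes X B Q :: "rat mat"
  assumes X: "X \<in> carrier_mat n n" and B: "B \<in> carrier_mat n n"
    and uX: "upper_triangular X" and dX: "\<forall>i<n. X $$ (i, i) \<noteq> 0" and uB: "upper_triangular B"
    and h: "bij_betw h {..<n} {..<n}" and Q: "is_perm_mat n Q"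
    and XQ: "X * perm_mat n h = Q * B"
  shows "\<forall>i<n. \<forall>j<n. Q $$ (j, i) \<noteq> 0 \<longleftrightarrow> j = h i"
proof -
  have Qc: "Q \<in> carrier_mat n n"
    and Q01: "\<And>i j. i < n \<Longrightarrow> j < n \<Longrightarrow> Q $$ (i, j) \<noteq> 0 \<Longrightarrow> Q $$ (i, j) = 1"
    and Qcol: "\<And>j. j < n \<Longrightarrow> \<exists>!i. i < n \<and> Q $$ (i, j) = 1"
    using Q unfolding is_perm_mat_def by auto
  have hn: "h r < n" if "r < n" for r using h that by (auto simp: bij_betw_def)
  have "\<exists>k\<le>r. Q $$ (h r, k) \<noteq> 0" if r: "r < n" for r
  proof -
    have "(Q * B) $$ (h r, r) = X $$ (h r, h r)"
      unfolding XQ[symmetric] by (rule index_mult_perm_mat[of X n n]) (use X r hn in auto)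
    then have "(\<Sum>k<n. Q $$ (h r, k) * B $$ (k, r)) \<noteq> 0"
      using index_mult_mat_sum[OF Qc B hn[OF r] r] dX hn[OF r] by simp
    then obtain k where k: "k < n" "Q $$ (h r, k) \<noteq> 0" "B $$ (k, r) \<noteq> 0"
      by (metis (no_types, lifting) lessThan_iff mult_zero_left mult_zero_right sum.neutral)
    have "k \<le> r" using k uB B by (metis not_le upper_triangularD carrier_matD(1))
    with k show ?thesis by blast
  qed
  then obtain s where s: "\<And>r. r < n \<Longrightarrow> s r \<le> r \<and> Q $$ (h r, s r) = 1"
    using Q01 hn by (metis le_less_trans)
  have "inj_on s {..<n}"
  proof (rule inj_onI)
    fix r r' assume rr: "r \<in> {..<n}" "r' \<in> {..<n}" "s r = s r'"
    then have "s r < n" using s by (meson le_less_trans lessThan_iff)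
    moreover have "Q $$ (h r, s r) = 1" "Q $$ (h r', s r) = 1" using s rr by (metis lessThan_iff)+
    ultimately have "h r = h r'" using Qcol[of "s r"] hn rr by (metis lessThan_iff)
    then show "r = r'" using h rr by (auto simp: bij_betw_def inj_on_def)
  qed
  then have "s r = r" if "r < n" for r using inj_on_le_self_imp_id s that by blast
  then have Qh: "Q $$ (h r, r) = 1" if "r < n" for r using s that by metis
  show ?thesis
  proof (intro allI impI)
    fix i j assume i: "i < n" and j: "j < n"
    show "Q $$ (j, i) \<noteq> 0 \<longleftrightarrow> j = h i"
      using Q01[OF j i] Qcol[OF i] Qh[OF i] hn[OF i] j by auto
  qed
qed

lemma is_coxeter_perm_of_factorization:
  fixes M U1 U2 :: "rat mat"
  assumes U1: "U1 \<in> carrier_mat n n" "upper_triangular U1" "\<forall>i<n. U1 $$ (i, i) \<noteq> 0"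
    and U2: "U2 \<in> carrier_mat n n" "upper_triangular U2" "\<forall>i<n. U2 $$ (i, i) \<noteq> 0"
    and h: "bij_betw h {..<n} {..<n}"
    and M: "M = U1 * perm_mat n h * U2"
  shows "is_coxeter_perm n M h"
  unfolding is_coxeter_perm_def
proof (intro conjI allI impI)
  show "\<exists>U1 P U2. bruhat n M U1 P U2"
    using U1 U2 M is_perm_mat_perm_mat[OF h] unfolding bruhat_def by blast
  fix V1 Q V2 i j assume "bruhat n M V1 Q V2" and ij: "i < n" "j < n"
  then have V1: "V1 \<in> carrier_mat n n" "upper_triangular V1"
    and V2: "V2 \<in> carrier_mat n n" "upper_triangular V2"
    and Q: "is_perm_mat n Q" and MV: "M = V1 * Q * V2"
    unfolding bruhat_def by auto
  have Qc: "Q \<in> carrier_mat n n" using Q unfolding is_perm_mat_def by simp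
  have "det M = det U1 * det (perm_mat n h) * det U2"
    using M U1(1) U2(1) by (simp add: det_mult[of _ n])
  then have "det M \<noteq> 0"
    using upper_triangular_det_nonzero_iff U1 U2 det_perm_mat_nonzero[OF h] by auto
  moreover have "det M = det V1 * det Q * det V2"
    using MV V1(1) V2(1) Qc by (simp add: det_mult[of _ n])
  ultimately have "det V1 \<noteq> 0" "det V2 \<noteq> 0" by auto
  then have dV: "\<forall>i<n. V1 $$ (i, i) \<noteq> 0" "\<forall>i<n. V2 $$ (i, i) \<noteq> 0"
    using upper_triangular_det_nonzero_iff V1 V2 by auto
  obtain W1 where W1: "W1 \<in> carrier_mat n n" "W1 * V1 = 1\<^sub>m n" "upper_triangular W1"
    "\<forall>i<n. W1 $$ (i, i) \<noteq> 0"
    using upper_triangular_inverse_exists[OF V1 dV(1)] by blast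
  obtain W2 where W2: "W2 \<in> carrier_mat n n" "U2 * W2 = 1\<^sub>m n" "upper_triangular W2"
    using upper_triangular_inverse_exists[OF U2] by blast
  define P where "P = perm_mat n h"
  have Pc: "P \<in> carrier_mat n n" unfolding P_def by simp
  have "(W1 * U1) * P = Q * (V2 * W2)"
  proof -
    have "(W1 * U1) * P = (W1 * U1) * P * (U2 * W2)"
      using U1(1) W1(1) Pc W2(2) by simp
    also have "\<dots> = W1 * (U1 * P * U2) * W2"
      using U1(1) U2(1) W1(1) W2(1) Pc by (simp add: assoc_mult_mat[of _ n n _ n _ n])
    also have "\<dots> = W1 * (V1 * Q * V2) * W2"
      using M MV unfolding P_def by simp
    also have "\<dots> = (W1 * V1) * Q * (V2 * W2)"
      using V1(1) V2(1) W1(1) W2(1) Qc by (simp add: assoc_mult_mat[of _ n n _ n _ n])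
    finally show ?thesis using W1(2) Qc V2(1) W2(1) by simp
  qed
  moreover have "\<forall>i<n. (W1 * U1) $$ (i, i) \<noteq> 0"
    using upper_triangular_diag_mult[OF W1(1) U1(1) W1(3) U1(2)] W1(4) U1(3) by simp
  ultimately have "\<forall>i<n. \<forall>j<n. Q $$ (j, i) \<noteq> 0 \<longleftrightarrow> j = h i"
    unfolding P_def using W1 U1 V2 W2 h Q
    by (intro perm_mat_eq_of_upper_triangular_mult[of "W1 * U1" n "V2 * W2"])
      (simp_all add: upper_triangular_mult)
  with ij show "Q $$ (j, i) \<noteq> 0 \<longleftrightarrow> j = h i" by blast
qed

section \<open>Syzygies over a linear Nakayama algebra\<close>

locale kupisch_series =
  fixes n :: nat and c :: "nat \<Rightarrow> nat"
  assumes kupisch: "kupisch n c"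
begin

lemma c_last: "c (n - 1) = 1"
  and c_not_last: "a < n - 1 \<Longrightarrow> 2 \<le> c a \<and> c a - 1 \<le> c (Suc a)"
  using kupisch unfolding kupisch_def by auto

lemma c_pos:
  assumes "a < n"
  shows "1 \<le> c a"
proof (cases "a < n - 1")
  case False
  with assms have "a = n - 1" by simp
  then show ?thesis using c_last by simp
next
  case True
  then show ?thesis using c_not_last[of a] by linarith
qed

lemma c_le_Suc_c_Suc: "Suc a < n \<Longrightarrow> c a \<le> Suc (c (Suc a))"
  using c_not_last[of a] by (simp add: less_diff_conv, linarith)

text \<open>P(a) is the interval module from a to proj_end a. Beyond the last vertex proj_end is
  the identity, so its iterates get stuck at n.\<close>
definition proj_end :: "nat \<Rightarrow> nat" where
  "proj_end a = (if a < n then a + c a else a)"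

lemma less_proj_end: "a < n \<Longrightarrow> a < proj_end a"
  using c_pos[of a] by (simp add: proj_end_def)

lemma le_proj_end: "a \<le> proj_end a"
  by (simp add: proj_end_def)

lemma mono_proj_end: "mono proj_end"
  unfolding mono_iff_le_Suc
proof
  fix a
  consider "Suc a < n" | "Suc a = n" | "n < Suc a" by linarith
  then show "proj_end a \<le> proj_end (Suc a)"
  proof cases
    case 1
    then show ?thesis using c_le_Suc_c_Suc[of a] by (simp add: proj_end_def)
  next
    case 2
    then have "a = n - 1" by simp
    with 2 show ?thesis using c_last by (simp add: proj_end_def)
  qed (simp add: proj_end_def)
qed

lemma proj_end_le: "a \<le> n \<Longrightarrow> proj_end a \<le> n"
  using monoD[OF mono_proj_end, of a n] by (simp add: proj_end_def)

lemma funpow_proj_end_mono: "x \<le> y \<Longrightarrow> i \<le> j \<Longrightarrow> (proj_end ^^ i) x \<le> (proj_end ^^ j) y"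
  by (rule funpow_mono2[OF mono_proj_end _ _ le_proj_end])

lemma min_le_funpow_proj_end: "min (a + m) n \<le> (proj_end ^^ m) a"
proof (induction m)
  case (Suc m)
  show ?case
  proof (cases "(proj_end ^^ m) a < n")
    case True
    then show ?thesis using Suc.IH less_proj_end[OF True] by simp
  next
    case False
    then show ?thesis using le_proj_end[of "(proj_end ^^ m) a"] by simp
  qed
qed simp

definition inj_top :: "nat \<Rightarrow> nat" where
  "inj_top r = (LEAST i. i \<le> r \<and> r - i + 1 \<le> c i)"

lemma inj_top:
  assumes "r < n"
  shows inj_top_le: "inj_top r \<le> r"
    and less_proj_end_inj_top: "r < proj_end (inj_top r)"
    and proj_end_le_of_less_inj_top: "i < inj_top r \<Longrightarrow> proj_end i \<le> r"
proof -
  have "r \<le> r \<and> r - r + 1 \<le> c r" using c_pos[OF assms] by simp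
  then have least: "inj_top r \<le> r \<and> r - inj_top r + 1 \<le> c (inj_top r)"
    unfolding inj_top_def by (rule LeastI)
  then show "inj_top r \<le> r" by simp
  have "inj_top r < n" using least assms by simp
  then show "r < proj_end (inj_top r)" using least unfolding proj_end_def by simp linarith
  assume i: "i < inj_top r"
  then have "\<not> (i \<le> r \<and> r - i + 1 \<le> c i)"
    unfolding inj_top_def by (rule not_less_Least)
  with i least assms show "proj_end i \<le> r" by (simp add: proj_end_def; linarith)
qed

lemma inj_env_eq: "r < n \<Longrightarrow> inj_env c r = Some (inj_top r, Suc r - inj_top r)"
  unfolding inj_env_def inj_top_def[symmetric] using inj_top_le by (simp add: Let_def Suc_diff_le)

text \<open>While none of them is projective, the k-th syzygy of the interval module
  Some (x, y - x) is the interval from syz_seq x y k to syz_seq x y (Suc k).\<close>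
fun syz_seq :: "nat \<Rightarrow> nat \<Rightarrow> nat \<Rightarrow> nat" where
  "syz_seq x y 0 = x"
| "syz_seq x y (Suc 0) = y"
| "syz_seq x y (Suc (Suc k)) = proj_end (syz_seq x y k)"

definition syz_proj :: "nat \<Rightarrow> nat \<Rightarrow> nat \<Rightarrow> bool" where
  "syz_proj x y k \<longleftrightarrow> syz_seq x y (Suc k) = proj_end (syz_seq x y k)"

lemma syz_seq_even: "syz_seq x y (2 * m) = (proj_end ^^ m) x"
  by (induction m) (auto simp: mult_2)

lemma syz_seq_odd: "syz_seq x y (Suc (2 * m)) = (proj_end ^^ m) y"
  by (induction m) (auto simp: mult_2)

lemma syz_proj_even: "syz_proj x y (2 * m) \<longleftrightarrow> (proj_end ^^ m) y = (proj_end ^^ Suc m) x"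
  unfolding syz_proj_def syz_seq_even syz_seq_odd by simp

lemma syz_proj_odd:
  "syz_proj x y (Suc (2 * m)) \<longleftrightarrow> (proj_end ^^ Suc m) x = (proj_end ^^ Suc m) y"
  using syz_seq_even[of x y "Suc m"] syz_seq_odd[of x y "Suc m"] unfolding syz_proj_def by simp

lemma syz_seq_interval:
  assumes xy: "x < y" "y \<le> proj_end x" "x < n" and np: "\<forall>k'<k. \<not> syz_proj x y k'"
  shows "syz_seq x y k < syz_seq x y (Suc k) \<and> syz_seq x y (Suc k) \<le> proj_end (syz_seq x y k)
    \<and> syz_seq x y k < n"
  using np
proof (induction k)
  case (Suc k)
  let ?z = "syz_seq x y"
  from Suc have "?z k < ?z (Suc k)" "?z (Suc k) < proj_end (?z k)" "?z k < n"
    unfolding syz_proj_def by (auto simp: order.strict_iff_order)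
  moreover have "proj_end (?z k) \<le> n" using \<open>?z k < n\<close> proj_end_le by simp
  ultimately show ?case using monoD[OF mono_proj_end, of "?z k" "?z (Suc k)"] by simp
qed (use xy in simp)

lemma is_proj_interval: "a < b \<Longrightarrow> a < n \<Longrightarrow> is_proj c (Some (a, b - a)) \<longleftrightarrow> b = proj_end a"
  by (auto simp: proj_end_def)

lemma funpow_syz_interval:
  assumes xy: "x < y" "y \<le> proj_end x" "x < n" and np: "\<forall>k'<k. \<not> syz_proj x y k'"
  shows "(syz c ^^ k) (Some (x, y - x)) = Some (syz_seq x y k, syz_seq x y (Suc k) - syz_seq x y k)"
  using np
proof (induction k)
  case (Suc k)
  let ?z = "syz_seq x y"
  have "?z k < ?z (Suc k)" "?z (Suc k) \<le> proj_end (?z k)" "?z k < n"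
    using syz_seq_interval[OF xy] Suc.prems by auto
  moreover have "?z (Suc k) \<noteq> proj_end (?z k)" using Suc.prems unfolding syz_proj_def by simp
  ultimately have "?z k < ?z (Suc k)" "?z (Suc k) < ?z k + c (?z k)" "?z k < n"
    by (simp_all add: proj_end_def)
  then show ?case using Suc by (simp add: proj_end_def, linarith)
qed simp

lemma syz_proj_exists:
  assumes xy: "x < y" "y \<le> proj_end x" "x < n"
  shows "\<exists>k. syz_proj x y k"
proof (rule ccontr)
  assume "\<nexists>k. syz_proj x y k"
  then have "syz_seq x y k < syz_seq x y (Suc k) \<and> syz_seq x y k < n" for k
    using syz_seq_interval[OF xy] by blast
  moreover from this have "k \<le> syz_seq x y k" for k
    by (induction k) (auto simp: Suc_le_eq intro: le_less_trans)
  ultimately show False by (meson leD)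
qed

lemma pdim_interval:
  assumes xy: "x < y" "y \<le> proj_end x" "x < n"
  shows "pdim c (Some (x, y - x)) = enat (LEAST k. syz_proj x y k)"
proof -
  let ?M = "Some (x, y - x)"
  have iff: "is_proj c ((syz c ^^ k) ?M) \<longleftrightarrow> syz_proj x y k" if "\<forall>k'<k. \<not> syz_proj x y k'" for k
    using funpow_syz_interval[OF xy that] syz_seq_interval[OF xy that] is_proj_interval
    unfolding syz_proj_def by simp
  obtain p where p: "syz_proj x y p" "\<forall>k<p. \<not> syz_proj x y k"
    using syz_proj_exists[OF xy] exists_least_iff[of "syz_proj x y"] by blast
  then have least: "(LEAST k. syz_proj x y k) = p"
    by (intro Least_equality) (auto simp: not_less[symmetric])
  have "(LEAST k. is_proj c ((syz c ^^ k) ?M)) = p"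
  proof (rule Least_equality)
    show "is_proj c ((syz c ^^ p) ?M)" using iff p by blast
    fix k assume "is_proj c ((syz c ^^ k) ?M)"
    with iff p show "p \<le> k" by (meson less_imp_le not_le order.strict_trans)
  qed
  moreover have "\<exists>k. is_proj c ((syz c ^^ k) ?M)" using iff p by blast
  ultimately show ?thesis unfolding pdim_def least by simp
qed

lemma orbits_interleave:
  assumes r: "r < n"
  shows "(proj_end ^^ m) (inj_top r) \<le> (proj_end ^^ m) r"
    and "(proj_end ^^ m) r \<le> (proj_end ^^ m) (Suc r)"
    and "(proj_end ^^ m) (Suc r) \<le> (proj_end ^^ Suc m) (inj_top r)"
proof -
  show "(proj_end ^^ m) (inj_top r) \<le> (proj_end ^^ m) r"
    using inj_top_le[OF r] by (simp add: funpow_proj_end_mono)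
  show "(proj_end ^^ m) r \<le> (proj_end ^^ m) (Suc r)"
    by (simp add: funpow_proj_end_mono)
  have "Suc r \<le> proj_end (inj_top r)" using less_proj_end_inj_top[OF r] by simp
  then show "(proj_end ^^ m) (Suc r) \<le> (proj_end ^^ Suc m) (inj_top r)"
    using funpow_proj_end_mono[of "Suc r" "proj_end (inj_top r)" m m]
    by (simp add: funpow_Suc_right del: funpow.simps)
qed

text \<open>At even steps a projective syzygy of S_r forces one of I(r), at odd steps the other
  way round; this is why N(S_r) is S_r for odd and I(r) for even e(S_r).\<close>
lemma syz_proj_simple_or_inj:
  assumes r: "r < n"
  shows "syz_proj r (Suc r) k \<or> syz_proj (inj_top r) (Suc r) k \<longleftrightarrow>
    syz_proj (if even k then inj_top r else r) (Suc r) k"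
proof (cases "even k")
  case True
  then obtain m where k: "k = 2 * m" by (rule evenE)
  have "(proj_end ^^ Suc m) (inj_top r) \<le> (proj_end ^^ Suc m) r"
    "(proj_end ^^ m) (Suc r) \<le> (proj_end ^^ Suc m) (inj_top r)"
    using orbits_interleave[OF r] by blast+
  then show ?thesis unfolding k syz_proj_even by (simp del: funpow.simps) linarith
next
  case False
  then obtain m where "k = 2 * m + 1" by (rule oddE)
  then have k: "k = Suc (2 * m)" by simp
  have "(proj_end ^^ Suc m) (inj_top r) \<le> (proj_end ^^ Suc m) r"
    "(proj_end ^^ Suc m) r \<le> (proj_end ^^ Suc m) (Suc r)"
    using orbits_interleave[OF r] by blast+
  then show ?thesis unfolding k syz_proj_odd by (simp del: funpow.simps) linarith
qed

text \<open>res_len r is e(S_r), N(S_r) is the interval module from N_top r to Suc r, and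
  res_seq r k is the top of its k-th syzygy.\<close>
definition res_len :: "nat \<Rightarrow> nat" where
  "res_len r = (LEAST k. syz_proj (if even k then inj_top r else r) (Suc r) k)"

definition N_top :: "nat \<Rightarrow> nat" where
  "N_top r = (if even (res_len r) then inj_top r else r)"

definition res_seq :: "nat \<Rightarrow> nat \<Rightarrow> nat" where
  "res_seq r = syz_seq (N_top r) (Suc r)"

definition hperm :: "nat \<Rightarrow> nat" where
  "hperm r = res_seq r (res_len r)"

lemma interval_simple: "r < n \<Longrightarrow> r < Suc r \<and> Suc r \<le> proj_end r \<and> r < n"
  using less_proj_end[of r] by simp

lemma interval_inj:
  "r < n \<Longrightarrow> inj_top r < Suc r \<and> Suc r \<le> proj_end (inj_top r) \<and> inj_top r < n"
  using inj_top_le[of r] less_proj_end_inj_top[of r] by simp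

lemma res_len:
  assumes r: "r < n"
  shows syz_proj_res_len: "syz_proj (N_top r) (Suc r) (res_len r)"
    and not_syz_proj_simple: "k < res_len r \<Longrightarrow> \<not> syz_proj r (Suc r) k"
    and not_syz_proj_inj: "k < res_len r \<Longrightarrow> \<not> syz_proj (inj_top r) (Suc r) k"
proof -
  obtain k0 where "syz_proj r (Suc r) k0"
    using syz_proj_exists[of r "Suc r"] interval_simple[OF r] by blast
  then have "syz_proj (if even k0 then inj_top r else r) (Suc r) k0"
    using syz_proj_simple_or_inj[OF r] by blast
  then show "syz_proj (N_top r) (Suc r) (res_len r)"
    unfolding N_top_def res_len_def by (rule LeastI)
  assume "k < res_len r"
  then have "\<not> syz_proj (if even k then inj_top r else r) (Suc r) k"
    unfolding res_len_def by (rule not_less_Least)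
  then show "\<not> syz_proj r (Suc r) k" "\<not> syz_proj (inj_top r) (Suc r) k"
    using syz_proj_simple_or_inj[OF r] by blast+
qed

lemma N_top:
  assumes r: "r < n"
  shows inj_top_le_N_top: "inj_top r \<le> N_top r"
    and N_top_le: "N_top r \<le> r"
    and interval_N_top: "N_top r < Suc r \<and> Suc r \<le> proj_end (N_top r) \<and> N_top r < n"
    and not_syz_proj_N_top: "k < res_len r \<Longrightarrow> \<not> syz_proj (N_top r) (Suc r) k"
  using inj_top_le[OF r] interval_simple[OF r] interval_inj[OF r]
    not_syz_proj_simple[OF r] not_syz_proj_inj[OF r]
  by (auto simp: N_top_def)

lemma e_val_eq_res_len:
  assumes r: "r < n"
  shows "e_val c r = enat (res_len r)"
proof -
  have "simple_mod r = Some (r, Suc r - r)" by (simp add: simple_mod_def)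
  then have "pdim c (simple_mod r) = enat (LEAST k. syz_proj r (Suc r) k)"
    using pdim_interval[of r "Suc r"] interval_simple[OF r] by simp
  moreover have "pdim c (inj_env c r) = enat (LEAST k. syz_proj (inj_top r) (Suc r) k)"
    unfolding inj_env_eq[OF r] using pdim_interval[of "inj_top r" "Suc r"] interval_inj[OF r] by simp
  moreover have "min (LEAST k. syz_proj r (Suc r) k) (LEAST k. syz_proj (inj_top r) (Suc r) k)
      = res_len r"
  proof -
    have "syz_proj r (Suc r) (res_len r) \<or> syz_proj (inj_top r) (Suc r) (res_len r)"
      using syz_proj_res_len[OF r] unfolding N_top_def by (auto split: if_splits)
    then have "min (LEAST k. syz_proj r (Suc r) k) (LEAST k. syz_proj (inj_top r) (Suc r) k)
        \<le> res_len r"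
      by (meson Least_le min.coboundedI1 min.coboundedI2)
    moreover have "res_len r \<le> (LEAST k. syz_proj r (Suc r) k)"
      using LeastI_ex[OF syz_proj_exists[of r "Suc r"]] interval_simple[OF r]
        not_syz_proj_simple[OF r] not_less by blast
    moreover have "res_len r \<le> (LEAST k. syz_proj (inj_top r) (Suc r) k)"
      using LeastI_ex[OF syz_proj_exists[of "inj_top r" "Suc r"]] interval_inj[OF r]
        not_syz_proj_inj[OF r] not_less by blast
    ultimately show ?thesis by simp
  qed
  ultimately show ?thesis unfolding e_val_def by simp
qed

lemma N_mod_eq: "r < n \<Longrightarrow> N_mod c r = Some (N_top r, Suc r - N_top r)"
  by (simp add: N_mod_def N_top_def e_val_eq_res_len simple_mod_def inj_env_eq)

lemma ringel_hperm_eq_hperm: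
  assumes r: "r < n"
  shows "ringel_hperm c r = hperm r"
proof -
  have "(syz c ^^ res_len r) (N_mod c r) = Some (hperm r, res_seq r (Suc (res_len r)) - hperm r)"
    unfolding N_mod_eq[OF r] hperm_def res_seq_def
    using interval_N_top[OF r] not_syz_proj_N_top[OF r] by (intro funpow_syz_interval) auto
  then show ?thesis unfolding ringel_hperm_def e_val_eq_res_len[OF r] by simp
qed

lemma res_seq_simps[simp]:
  "res_seq r 0 = N_top r"
  "res_seq r (Suc 0) = Suc r"
  "res_seq r (Suc (Suc k)) = proj_end (res_seq r k)"
  by (simp_all add: res_seq_def)

lemma res_seq_interval:
  assumes "r < n" "k \<le> res_len r"
  shows "res_seq r k < res_seq r (Suc k) \<and> res_seq r (Suc k) \<le> proj_end (res_seq r k)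
    \<and> res_seq r k < n"
  unfolding res_seq_def using assms interval_N_top not_syz_proj_N_top
  by (intro syz_seq_interval) auto

lemma res_seq_Suc_res_len: "r < n \<Longrightarrow> res_seq r (Suc (res_len r)) = proj_end (hperm r)"
  using syz_proj_res_len unfolding syz_proj_def res_seq_def hperm_def by simp

lemma res_seq_strict_mono:
  assumes r: "r < n"
  shows "k < k' \<Longrightarrow> k' \<le> Suc (res_len r) \<Longrightarrow> res_seq r k < res_seq r k'"
proof (induction k')
  case (Suc k')
  then have "res_seq r k' < res_seq r (Suc k')" using res_seq_interval[OF r, of k'] by simp
  with Suc show ?case by (cases "k = k'") auto
qed simp

lemma res_seq_le_hperm: "r < n \<Longrightarrow> k \<le> res_len r \<Longrightarrow> res_seq r k \<le> hperm r"
  unfolding hperm_def using res_seq_strict_mono[of r k "res_len r"] by (cases "k = res_len r") auto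

lemma hperm_less: "r < n \<Longrightarrow> hperm r < n"
  unfolding hperm_def using res_seq_interval by blast

lemma inj_top_le_hperm: "r < n \<Longrightarrow> inj_top r \<le> hperm r"
  using res_seq_le_hperm[of r 0] inj_top_le_N_top by fastforce

section \<open>The homological permutation is a bijection\<close>

definition orbit_entry :: "nat \<Rightarrow> nat \<Rightarrow> nat" where
  "orbit_entry j x = (proj_end ^^ (LEAST m. j \<le> (proj_end ^^ m) x)) x"

lemma orbit_entry_eqI:
  assumes "j \<le> (proj_end ^^ m) x" and "\<And>m'. m' < m \<Longrightarrow> (proj_end ^^ m') x < j"
  shows "orbit_entry j x = (proj_end ^^ m) x"
proof -
  have "(LEAST m. j \<le> (proj_end ^^ m) x) = m"
    using assms by (intro Least_equality) (auto simp: not_less[symmetric])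
  then show ?thesis unfolding orbit_entry_def by simp
qed

lemma orbit_entry_cases:
  assumes "j \<le> n"
  obtains m where "j \<le> (proj_end ^^ m) x" "\<And>m'. m' < m \<Longrightarrow> (proj_end ^^ m') x < j"
    "orbit_entry j x = (proj_end ^^ m) x"
proof
  let ?m = "LEAST m. j \<le> (proj_end ^^ m) x"
  have "j \<le> (proj_end ^^ j) x" using min_le_funpow_proj_end[of x j] assms by simp
  then show "j \<le> (proj_end ^^ ?m) x" by (rule LeastI)
  show "(proj_end ^^ m') x < j" if "m' < ?m" for m'
    using not_less_Least[OF that] by simp
qed (simp add: orbit_entry_def)

lemma orbit_entry_proj_end:
  assumes "x < j" "j \<le> n"
  shows "orbit_entry j (proj_end x) = orbit_entry j x"
proof -
  obtain m where m: "j \<le> (proj_end ^^ m) x" "\<And>m'. m' < m \<Longrightarrow> (proj_end ^^ m') x < j"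
    "orbit_entry j x = (proj_end ^^ m) x"
    using orbit_entry_cases[OF assms(2)] by blast
  with assms(1) obtain m0 where m0: "m = Suc m0" by (cases m) auto
  have shift: "(proj_end ^^ Suc k) x = (proj_end ^^ k) (proj_end x)" for k
    by (simp add: funpow_Suc_right del: funpow.simps)
  have "orbit_entry j (proj_end x) = (proj_end ^^ m0) (proj_end x)"
  proof (rule orbit_entry_eqI)
    show "j \<le> (proj_end ^^ m0) (proj_end x)" using m(1) m0 shift[of m0] by simp
    show "(proj_end ^^ m') (proj_end x) < j" if "m' < m0" for m'
      using m(2)[of "Suc m'"] that m0 shift[of m'] by simp
  qed
  then show ?thesis using m(3) m0 shift by simp
qed

lemma orbit_entry_Suc:
  assumes j: "j < n"
  shows "orbit_entry (Suc j) x = (if orbit_entry j x = j then proj_end j else orbit_entry j x)"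
proof -
  obtain m where m: "j \<le> (proj_end ^^ m) x" "\<And>m'. m' < m \<Longrightarrow> (proj_end ^^ m') x < j"
    "orbit_entry j x = (proj_end ^^ m) x"
    using orbit_entry_cases[of j x] j by auto
  show ?thesis
  proof (cases "(proj_end ^^ m) x = j")
    case True
    have "orbit_entry (Suc j) x = (proj_end ^^ Suc m) x"
      using True m(2) less_proj_end[OF j] by (intro orbit_entry_eqI) (auto simp: less_Suc_eq)
    then show ?thesis using True m(3) by simp
  next
    case False
    have "orbit_entry (Suc j) x = (proj_end ^^ m) x"
      using False m(1,2) by (intro orbit_entry_eqI) (auto simp: less_Suc_eq)
    then show ?thesis using False m(3) by simp
  qed
qed

lemma orbit_entries_merge:
  assumes "j < n" "orbit_entry j u \<noteq> orbit_entry j v"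
    and "orbit_entry (Suc j) u = orbit_entry (Suc j) v"
  shows "{orbit_entry j u, orbit_entry j v} = {j, proj_end j}"
  using assms orbit_entry_Suc[OF assms(1)] by (auto split: if_splits)

lemma orbit_entry_inj_top:
  assumes r: "r < n" and j: "inj_top r \<le> j" "j \<le> n"
  shows "d \<le> r \<Longrightarrow> \<exists>d'. inj_top r \<le> d' \<and> d' \<le> r \<and> orbit_entry j d' = orbit_entry j d"
proof (induction "r - d" arbitrary: d rule: less_induct)
  case less
  show ?case
  proof (cases "inj_top r \<le> d")
    case False
    then have "proj_end d \<le> r" "d < proj_end d"
      using proj_end_le_of_less_inj_top[OF r] less_proj_end[of d] less.prems r by auto
    moreover from this have "r - proj_end d < r - d" by simp
    ultimately obtain d' where
      "inj_top r \<le> d' \<and> d' \<le> r \<and> orbit_entry j d' = orbit_entry j (proj_end d)"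
      using less.hyps by blast
    moreover have "orbit_entry j (proj_end d) = orbit_entry j d"
      using False j by (intro orbit_entry_proj_end) auto
    ultimately show ?thesis by metis
  qed (use less.prems in blast)
qed

lemma funpow_res_seq: "(proj_end ^^ i) (res_seq r p) = res_seq r (p + 2 * i)"
proof (induction i)
  case (Suc i)
  have "p + 2 * Suc i = Suc (Suc (p + 2 * i))" by simp
  with Suc show ?case by simp
qed simp

lemma orbit_entry_Suc_hperm:
  assumes r: "r < n" and p: "p \<le> 1"
  shows "orbit_entry (Suc (hperm r)) (res_seq r p) = proj_end (hperm r)"
proof -
  let ?e = "res_len r"
  define i0 where "i0 = (Suc (Suc ?e) - p) div 2"
  have "p + 2 * i0 = Suc ?e \<or> p + 2 * i0 = Suc (Suc ?e)" and early: "\<And>i. i < i0 \<Longrightarrow> p + 2 * i \<le> ?e"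
    using p unfolding i0_def by presburger+
  then have "res_seq r (p + 2 * i0) = proj_end (hperm r)"
    using res_seq_Suc_res_len[OF r] by (auto simp: hperm_def)
  moreover have "Suc (hperm r) \<le> proj_end (hperm r)" using less_proj_end[OF hperm_less[OF r]] by simp
  moreover have "res_seq r (p + 2 * i) < Suc (hperm r)" if "i < i0" for i
    using res_seq_le_hperm[OF r early[OF that]] by simp
  ultimately show ?thesis
    by (subst orbit_entry_eqI[of _ i0]) (simp_all add: funpow_res_seq)
qed

lemma funpow_simple_less_top:
  assumes r: "r < n" and m: "2 * m \<le> res_len r"
  shows "(proj_end ^^ m) r < (proj_end ^^ m) (Suc r)"
proof (cases m)
  case (Suc m')
  then have "\<not> syz_proj r (Suc r) (Suc (2 * m'))" using not_syz_proj_simple[OF r] m by simp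
  then show ?thesis using orbits_interleave(2)[OF r, of m] Suc by (simp add: syz_proj_odd del: funpow.simps)
qed simp

lemma funpow_top_less_inj:
  assumes r: "r < n" and m: "2 * m < res_len r"
  shows "(proj_end ^^ m) (Suc r) < (proj_end ^^ Suc m) (inj_top r)"
  using not_syz_proj_inj[OF r m] orbits_interleave(3)[OF r, of m]
  by (simp add: syz_proj_even del: funpow.simps)

lemma hperm_even: "res_len r = 2 * m \<Longrightarrow> hperm r = (proj_end ^^ m) (inj_top r)"
  by (simp add: hperm_def res_seq_def N_top_def syz_seq_even)

lemma hperm_odd: "res_len r = Suc (2 * m) \<Longrightarrow> hperm r = (proj_end ^^ m) (Suc r)"
  by (simp add: hperm_def res_seq_def syz_seq_odd)

lemma orbit_entry_hperm_ne:
  assumes r: "r < n" and d: "d \<le> r"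
  shows "orbit_entry (hperm r) d \<noteq> orbit_entry (hperm r) (Suc r)"
proof -
  let ?j = "hperm r" and ?g = "inj_top r" and ?F = "\<lambda>m x. (proj_end ^^ m) x"
  obtain d' where d': "?g \<le> d'" "d' \<le> r" "orbit_entry ?j d' = orbit_entry ?j d"
    using orbit_entry_inj_top[OF r inj_top_le_hperm[OF r]] hperm_less[OF r] d by fastforce
  have between: "?F k ?g \<le> ?F k d'" "?F k d' \<le> ?F k r" for k
    using d' by (simp_all add: funpow_proj_end_mono)
  have orbit_mono: "x \<le> y \<Longrightarrow> k \<le> l \<Longrightarrow> ?F k x \<le> ?F l y" for x y k l
    by (rule funpow_proj_end_mono)
  show ?thesis
  proof (cases "even (res_len r)")
    case True
    then obtain m where e: "res_len r = 2 * m" by (rule evenE)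
    have j: "?j = ?F m ?g" by (rule hperm_even[OF e])
    have top: "?F m' (Suc r) < ?j" if "m' < m" for m'
      using funpow_top_less_inj[OF r, of m'] orbit_mono[of ?g ?g "Suc m'" m] that e j by simp
    have "orbit_entry ?j d' = ?F m d'"
    proof (rule orbit_entry_eqI)
      show "?j \<le> ?F m d'" using j between(1) by simp
      show "?F m' d' < ?j" if "m' < m" for m'
        using between(2)[of m'] orbits_interleave(2)[OF r, of m'] top[OF that] by simp
    qed
    moreover have "orbit_entry ?j (Suc r) = ?F m (Suc r)"
    proof (rule orbit_entry_eqI)
      show "?j \<le> ?F m (Suc r)" using j inj_top_le[OF r] orbit_mono[of ?g "Suc r" m m] by simp
    qed (rule top)
    moreover have "?F m d' < ?F m (Suc r)"
      using between(2)[of m] funpow_simple_less_top[OF r, of m] e by simp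
    ultimately show ?thesis using d'(3) by simp
  next
    case False
    then obtain m where "res_len r = 2 * m + 1" by (rule oddE)
    then have e: "res_len r = Suc (2 * m)" by simp
    have j: "?j = ?F m (Suc r)" by (rule hperm_odd[OF e])
    have above: "?j < ?F (Suc m) ?g"
      using funpow_top_less_inj[OF r, of m] e j by simp
    have "orbit_entry ?j d' = ?F (Suc m) d'"
    proof (rule orbit_entry_eqI)
      show "?j \<le> ?F (Suc m) d'" using above between(1)[of "Suc m"] by simp
      show "?F m' d' < ?j" if "m' < Suc m" for m'
        using between(2)[of m'] orbit_mono[of r r m' m] funpow_simple_less_top[OF r, of m] that e j
        by simp
    qed
    moreover have "orbit_entry ?j (Suc r) = ?j"
    proof -
      have "?F m' (Suc r) < ?j" if "m' < m" for m'
        using funpow_top_less_inj[OF r, of m'] orbit_mono[of ?g "Suc r" "Suc m'" m]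
          inj_top_le[OF r] that e j by simp
      then have "orbit_entry ?j (Suc r) = ?F m (Suc r)"
        using j by (intro orbit_entry_eqI) simp_all
      then show ?thesis using j by simp
    qed
    ultimately show ?thesis using d'(3) above between(1)[of "Suc m"] by simp
  qed
qed

lemma orbit_entry_Suc_hperm_joins:
  assumes "r < n"
  shows "orbit_entry (Suc (hperm r)) (N_top r) = orbit_entry (Suc (hperm r)) (Suc r)"
  using orbit_entry_Suc_hperm[OF assms, of 0] orbit_entry_Suc_hperm[OF assms, of 1] by simp

lemma inj_on_hperm: "inj_on hperm {..<n}"
proof -
  have "hperm r \<noteq> hperm r'" if rr: "r < r'" "r' < n" for r r'
  proof
    assume eq: "hperm r = hperm r'"
    let ?j = "hperm r"
    have r: "r < n" using rr by simp
    have merge: "{orbit_entry ?j (N_top s), orbit_entry ?j (Suc s)} = {?j, proj_end ?j}"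
      if "s < n" "hperm s = ?j" for s
      using orbit_entries_merge[OF hperm_less[OF r]] orbit_entry_Suc_hperm_joins[OF that(1)]
        orbit_entry_hperm_ne[OF that(1) N_top_le[OF that(1)]] that by auto
    have "orbit_entry ?j (Suc r') \<noteq> orbit_entry ?j (N_top r)"
      "orbit_entry ?j (Suc r') \<noteq> orbit_entry ?j (Suc r)"
      using orbit_entry_hperm_ne[OF rr(2), of "N_top r"] orbit_entry_hperm_ne[OF rr(2), of "Suc r"]
        N_top_le[OF r] rr eq by auto
    with merge[OF r refl] merge[OF rr(2) eq[symmetric]] show False by blast
  qed
  then show ?thesis by (metis inj_onI lessThan_iff nat_neq_iff)
qed

lemma bij_betw_hperm: "bij_betw hperm {..<n} {..<n}"
proof -
  have "hperm ` {..<n} \<subseteq> {..<n}" using hperm_less by auto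
  then show ?thesis using inj_on_hperm by (simp add: bij_betw_def endo_inj_surj)
qed

end

section \<open>Cartan and Coxeter matrices\<close>

lemma sum_alternating_interval_indicators:
  fixes y :: "nat \<Rightarrow> nat"
  assumes "\<forall>k \<le> Suc e. y k \<le> y (Suc k)"
  shows "(\<Sum>k\<le>e. (-1::'a::ring_1) ^ k * (if y k \<le> i \<and> i < y (Suc (Suc k)) then 1 else 0)) =
    (if y 0 \<le> i \<and> i < y 1 then 1 else 0)
    + (-1) ^ e * (if y (Suc e) \<le> i \<and> i < y (Suc (Suc e)) then 1 else 0)"
  using assms
proof (induction e)
  case 0
  then have "y 0 \<le> y 1" "y 1 \<le> y 2" by (auto simp: numeral_2_eq_2)
  then show ?case by (auto simp: numeral_2_eq_2)
next
  case (Suc e)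
  let ?ind = "\<lambda>a b. if y a \<le> i \<and> i < y b then 1 else (0::'a)"
  have "y (Suc e) \<le> y (Suc (Suc e))" "y (Suc (Suc e)) \<le> y (Suc (Suc (Suc e)))"
    using Suc.prems by auto
  then have "?ind (Suc e) (Suc (Suc (Suc e)))
      = ?ind (Suc e) (Suc (Suc e)) + ?ind (Suc (Suc e)) (Suc (Suc (Suc e)))"
    by auto
  with Suc show ?case by (simp add: algebra_simps)
qed

context kupisch_series
begin

lemma alternating_sum_res_seq:
  assumes r: "r < n"
  shows "(\<Sum>k\<le>res_len r. (-1::rat) ^ k
      * (if res_seq r k \<le> i \<and> i < proj_end (res_seq r k) then 1 else 0))
    = (if N_top r \<le> i \<and> i \<le> r then 1 else 0)"
proof -
  let ?e = "res_len r"
  have last: "res_seq r (Suc (Suc ?e)) = res_seq r (Suc ?e)"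
    using res_seq_Suc_res_len[OF r] by (simp add: hperm_def)
  have mono: "\<forall>k \<le> Suc ?e. res_seq r k \<le> res_seq r (Suc k)"
  proof (intro allI impI)
    fix k assume "k \<le> Suc ?e"
    then consider "k \<le> ?e" | "k = Suc ?e" by linarith
    then show "res_seq r k \<le> res_seq r (Suc k)"
      by cases (use res_seq_strict_mono[OF r, of k "Suc k"] last in auto)
  qed
  have "(\<Sum>k\<le>?e. (-1::rat) ^ k
      * (if res_seq r k \<le> i \<and> i < proj_end (res_seq r k) then 1 else 0))
    = (\<Sum>k\<le>?e. (-1) ^ k * (if res_seq r k \<le> i \<and> i < res_seq r (Suc (Suc k)) then 1 else 0))"
    by simp
  also have "\<dots> = (if res_seq r 0 \<le> i \<and> i < res_seq r 1 then 1 else 0)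
    + (-1) ^ ?e * (if res_seq r (Suc ?e) \<le> i \<and> i < res_seq r (Suc (Suc ?e)) then 1 else 0)"
    by (rule sum_alternating_interval_indicators[OF mono])
  also have "\<dots> = (if N_top r \<le> i \<and> i \<le> r then 1 else 0)"
    using last by auto
  finally show ?thesis .
qed

text \<open>Column r lists, with signs (-1)^k, the tops res_seq r k of the terms of the minimal
  projective resolution of N(S_r); the overall sign (-1)^(res_len r) makes the entry at its
  last top hperm r equal to 1.\<close>
definition resolution_mat :: "rat mat" where
  "resolution_mat = mat n n (\<lambda>(l, r).
     \<Sum>k\<le>res_len r. if res_seq r k = l then (-1) ^ (res_len r + k) else 0)"

definition dimvec_mat :: "rat mat" where
  "dimvec_mat = mat n n (\<lambda>(i, r). if N_top r \<le> i \<and> i \<le> r then (-1) ^ res_len r else 0)"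

lemma resolution_mat_carrier: "resolution_mat \<in> carrier_mat n n"
  unfolding resolution_mat_def by simp

lemma dimvec_mat_carrier: "dimvec_mat \<in> carrier_mat n n"
  unfolding dimvec_mat_def by simp

lemma cartan_carrier: "cartan n c \<in> carrier_mat n n"
  unfolding cartan_def by simp

lemma index_cartan:
  "i < n \<Longrightarrow> l < n \<Longrightarrow> cartan n c $$ (i, l) = (if l \<le> i \<and> i < proj_end l then 1 else 0)"
  unfolding cartan_def by (simp add: proj_end_def)

text \<open>The dimension vector of N(S_r) is the alternating sum of those of the projectives in its
  resolution.\<close>
lemma cartan_mult_resolution_mat: "cartan n c * resolution_mat = dimvec_mat"
proof (rule eq_matI)
  fix i r assume "i < dim_row dimvec_mat" "r < dim_col dimvec_mat"
  then have i: "i < n" and r: "r < n" using dimvec_mat_carrier by auto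
  let ?e = "res_len r"
  let ?C = "cartan n c"
  have "(?C * resolution_mat) $$ (i, r) = (\<Sum>l<n. ?C $$ (i, l) * resolution_mat $$ (l, r))"
    using index_mult_mat_sum[OF cartan_carrier resolution_mat_carrier i r] .
  also have "\<dots> = (\<Sum>l<n. \<Sum>k\<le>?e. if res_seq r k = l then (-1) ^ (?e + k) * ?C $$ (i, l) else 0)"
    unfolding resolution_mat_def using r
    by (intro sum.cong) (auto simp: sum_distrib_left intro!: sum.cong)
  also have "\<dots> = (\<Sum>k\<le>?e. \<Sum>l<n. if res_seq r k = l then (-1) ^ (?e + k) * ?C $$ (i, l) else 0)"
    by (rule sum.swap)
  also have "\<dots> = (\<Sum>k\<le>?e. (-1) ^ (?e + k) * ?C $$ (i, res_seq r k))"
    using res_seq_interval[OF r] by (intro sum.cong) auto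
  also have "\<dots> = (-1) ^ ?e * (\<Sum>k\<le>?e. (-1) ^ k
      * (if res_seq r k \<le> i \<and> i < proj_end (res_seq r k) then 1 else 0))"
    using res_seq_interval[OF r] i
    by (auto simp: sum_distrib_left index_cartan power_add intro!: sum.cong)
  also have "\<dots> = dimvec_mat $$ (i, r)"
    unfolding alternating_sum_res_seq[OF r] dimvec_mat_def using i r by simp
  finally show "(?C * resolution_mat) $$ (i, r) = dimvec_mat $$ (i, r)" .
qed (use dimvec_mat_carrier cartan_carrier resolution_mat_carrier in auto)

lemma resolution_mat_below_hperm:
  assumes "l < n" "r < n" "hperm r < l"
  shows "resolution_mat $$ (l, r) = 0"
proof -
  have "res_seq r k \<noteq> l" if "k \<le> res_len r" for k
    using res_seq_le_hperm[OF assms(2) that] assms(3) by simp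
  then show ?thesis unfolding resolution_mat_def using assms by (simp add: sum.neutral)
qed

lemma resolution_mat_hperm:
  assumes r: "r < n"
  shows "resolution_mat $$ (hperm r, r) = 1"
proof -
  have "res_seq r k \<noteq> hperm r" if "k < res_len r" for k
    using res_seq_strict_mono[OF r that] unfolding hperm_def by simp
  then have "(\<Sum>k\<le>res_len r. if res_seq r k = hperm r then (-1::rat) ^ (res_len r + k) else 0)
      = (\<Sum>k\<le>res_len r. if k = res_len r then (-1) ^ (res_len r + res_len r) else 0)"
    by (intro sum.cong) (auto simp: hperm_def)
  then show ?thesis
    unfolding resolution_mat_def using r hperm_less[OF r] by (simp flip: mult_2)
qed

lemma upper_triangular_dimvec_mat: "upper_triangular dimvec_mat"
  by (rule upper_triangularI) (auto simp: dimvec_mat_def)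

lemma dimvec_mat_diag: "\<forall>r<n. dimvec_mat $$ (r, r) \<noteq> 0"
  using N_top_le by (simp add: dimvec_mat_def)

lemma upper_triangular_transpose_cartan: "upper_triangular (transpose_mat (cartan n c))"
  by (rule upper_triangularI) (auto simp: cartan_def)

lemma transpose_cartan_diag: "i < n \<Longrightarrow> transpose_mat (cartan n c) $$ (i, i) = 1"
  using c_pos[of i] by (simp add: cartan_def)

lemma coxeter_factorization:
  obtains U1 U2 where "U1 \<in> carrier_mat n n" "upper_triangular U1" "\<forall>i<n. U1 $$ (i, i) \<noteq> 0"
    "U2 \<in> carrier_mat n n" "upper_triangular U2" "\<forall>i<n. U2 $$ (i, i) \<noteq> 0"
    "coxeter n c = U1 * perm_mat n hperm * U2"
proof -
  let ?C = "cartan n c" and ?P = "perm_mat n hperm"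
  obtain T where T: "T \<in> carrier_mat n n" "upper_triangular T" "\<forall>i<n. T $$ (i, i) \<noteq> 0"
    and YT: "resolution_mat = T * ?P"
    using factor_upper_triangular_perm_mat[OF resolution_mat_carrier bij_betw_hperm
        resolution_mat_below_hperm] resolution_mat_hperm by auto
  obtain W where W: "W \<in> carrier_mat n n" "dimvec_mat * W = 1\<^sub>m n" "upper_triangular W"
    "\<forall>i<n. W $$ (i, i) \<noteq> 0"
    using upper_triangular_inverse_exists[OF dimvec_mat_carrier upper_triangular_dimvec_mat
        dimvec_mat_diag] by blast
  have "?C * (T * ?P * W) = (?C * (T * ?P)) * W"
    using cartan_carrier T(1) W(1) by (simp add: assoc_mult_mat[of _ n n _ n _ n])
  then have "?C * (T * ?P * W) = 1\<^sub>m n"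
    using cartan_mult_resolution_mat YT W(2) by simp
  then have "mat_inverse ?C = Some (T * ?P * W)"
    using cartan_carrier T(1) W(1) by (intro mat_inverse_eq_Some) auto
  then have "coxeter n c = (- (transpose_mat ?C * T)) * ?P * W"
    unfolding coxeter_def using cartan_carrier T(1) W(1)
    by (simp add: assoc_mult_mat[of _ n n _ n _ n] uminus_mult_left_mat)
  moreover have "upper_triangular (- (transpose_mat ?C * T))"
    using cartan_carrier T upper_triangular_transpose_cartan
    by (intro upper_triangular_uminus[of _ n] upper_triangular_mult[of _ n]) auto
  moreover have "\<forall>i<n. (- (transpose_mat ?C * T)) $$ (i, i) \<noteq> 0"
    using upper_triangular_diag_mult[of "transpose_mat ?C" n T] cartan_carrier T
      upper_triangular_transpose_cartan transpose_cartan_diag by auto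
  ultimately show ?thesis
    using that[of "- (transpose_mat ?C * T)" W] cartan_carrier T(1) W by auto
qed

end

theorem theorem3p1:
  fixes n :: nat and c :: "nat \<Rightarrow> nat"
  assumes "kupisch n c"
  shows "is_coxeter_perm n (coxeter n c) (ringel_hperm c)"
proof -
  interpret kupisch_series n c by (rule kupisch_series.intro) (rule assms)
  have same: "ringel_hperm c r = hperm r" if "r < n" for r
    using ringel_hperm_eq_hperm[OF that] .
  obtain U1 U2 where U1: "U1 \<in> carrier_mat n n" "upper_triangular U1" "\<forall>i<n. U1 $$ (i, i) \<noteq> 0"
    and U2: "U2 \<in> carrier_mat n n" "upper_triangular U2" "\<forall>i<n. U2 $$ (i, i) \<noteq> 0"
    and cox: "coxeter n c = U1 * perm_mat n hperm * U2"
    by (rule coxeter_factorization)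
  show ?thesis
  proof (rule is_coxeter_perm_of_factorization[OF U1 U2])
    show "bij_betw (ringel_hperm c) {..<n} {..<n}"
      using bij_betw_hperm by (rule bij_betw_cong[THEN iffD2, rotated]) (simp add: same)
    show "coxeter n c = U1 * perm_mat n (ringel_hperm c) * U2"
      using cox perm_mat_cong[of n "ringel_hperm c" hperm] same by simp
  qed
qed

end
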